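(* With $X$, $Q$ as below, for every even $\ell>2$, \[\sum_{j=0}^{n_\ell-1}\mathrm{gap}^{X,Q}_{\ell,j}\ge\delta_\ell\ln(n_\ell)/2,\] where $\mathrm{gap}^{X,Q}_{\ell,j}$ denotes $\mathrm{gap}^{X,Q}_i$ for the index $i$ with $\vec x_i=\vec x_{\ell,j}$.
   Context: $X$ and $Q$ are indexed by layers $\ell\ge2$ and positions $0\le j\le n_\ell-1$, ordered lexicographically in $(\ell,j)$, with $\vec q_0=\vec0$ prepended to $Q$. $n_\ell:=\ell\lceil\ln^2\ell\rceil+1$, $\theta_\ell:=\frac{\pi}{2(n_\ell-1)}$, $\vec x_{\ell,j}:=(\cos(j\theta_\ell),\sin(j\theta_\ell))$ for even $\ell$ and $(\sin(j\theta_\ell),\cos(j\theta_\ell))$ for odd $\ell$. $\alpha:=\sum_{\ell=2}^\infty\frac1{\ell\ln^2\ell}$, $z_\ell:=\frac1\alpha\sum_{m=2}^\ell\frac1{m\ln^2m}$ ($z_1=0$), $\delta_\ell:=z_\ell-z_{\ell-1}=\frac1{\alpha\ell\ln^2\ell}$, $z_{\ell,j}:=1-\delta_\ell\cot((j+1)\theta_\ell)$ for $j<n_\ell-1$, $z_{\ell,n_\ell-1}:=1$. For even $\ell$, $\vec q_{\ell,j}:=(z_\ell,z_{\ell,j})$; for odd $\ell$, $\vec q_{\ell,j}$ is any maximizer of $\vec x_{\ell,j}\cdot\vec q_{\ell',j'}$ over $(\ell',j')$ with $\ell'<\ell$. For a sequence $X=(\vec x_i)$ and $Q=(\vec q_i)_{i\ge0}$,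 $\mathrm{gap}_i^{X,Q}:=\min_{0\le j<i}(\vec q_i-\vec q_j)\cdot\vec x_i$. *)

theory Defs
  imports "HOL-Analysis.Analysis"
begin

definition nL :: "nat \<Rightarrow> nat" where
  "nL l = l * nat \<lceil>(ln (real l))^2\<rceil> + 1"

definition thetaL :: "nat \<Rightarrow> real" where
  "thetaL l = pi / (2 * (real (nL l) - 1))"

definition xv :: "nat \<Rightarrow> nat \<Rightarrow> real \<times> real" where
  "xv l j = (if even l then (cos (real j * thetaL l), sin (real j * thetaL l))
                       else (sin (real j * thetaL l), cos (real j * thetaL l)))"

definition alphaC :: real where
  "alphaC = (\<Sum>m. 1 / (real (m + 2) * (ln (real (m + 2)))^2))"

definition zL :: "nat \<Rightarrow> real" where
  "zL l = (1 / alphaC) * (\<Sum>m=2..l. 1 / (real m * (ln (real m))^2))"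

definition deltaL :: "nat \<Rightarrow> real" where
  "deltaL l = 1 / (alphaC * real l * (ln (real l))^2)"

definition zLJ :: "nat \<Rightarrow> nat \<Rightarrow> real" where
  "zLJ l j = (if j < nL l - 1 then 1 - deltaL l * cot (real (j + 1) * thetaL l) else 1)"

definition idx :: "(nat \<times> nat) set" where
  "idx = {(l, j). 2 \<le> l \<and> j < nL l}"

definition before :: "nat \<Rightarrow> nat \<Rightarrow> (nat \<times> nat) set" where
  "before l j = {(l', j') \<in> idx. l' < l \<or> (l' = l \<and> j' < j)}"

definition valid_Q :: "(nat \<Rightarrow> nat \<Rightarrow> real \<times> real) \<Rightarrow> bool" where
  "valid_Q q \<longleftrightarrow>
     (\<forall>l j. even l \<and> 2 \<le> l \<and> j < nL l \<longrightarrow> q l j = (zL l, zLJ l j)) \<and>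
     (\<forall>l j. odd l \<and> 2 \<le> l \<and> j < nL l \<longrightarrow>
        (\<exists>l' j'. 2 \<le> l' \<and> l' < l \<and> j' < nL l' \<and> q l j = q l' j' \<and>
           (\<forall>l'' j''. 2 \<le> l'' \<and> l'' < l \<and> j'' < nL l'' \<longrightarrow>
              xv l j \<bullet> q l'' j'' \<le> xv l j \<bullet> q l' j')))"

text \<open>gap at index (l,j): minimum over all earlier Q-points, including q_0 = 0.\<close>

definition gap :: "(nat \<Rightarrow> nat \<Rightarrow> real \<times> real) \<Rightarrow> nat \<Rightarrow> nat \<Rightarrow> real" where
  "gap q l j = Min (insert ((q l j - 0) \<bullet> xv l j)
                      ((\<lambda>(l', j'). (q l j - q l' j') \<bullet> xv l j) ` before l j))"

end

theory Submission
  imports Defs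
begin

text \<open>
  Odd layers only repeat earlier points, so on an even layer \<open>\<ell>\<close> all earlier points (including
  \<open>q\<^sub>0 = 0\<close>) lie in the box \<open>x \<le> z\<^sub>\<ell>\<^sub>-\<^sub>1 = z\<^sub>\<ell> - \<delta>\<^sub>\<ell>\<close>, \<open>y \<le> 1\<close>, while the new points
  \<open>(z\<^sub>\<ell>, z\<^sub>\<ell>\<^sub>,\<^sub>j)\<close> sit on the vertical line \<open>x = z\<^sub>\<ell>\<close>. The cotangent heights \<open>z\<^sub>\<ell>\<^sub>,\<^sub>j\<close> are chosen
  so that in direction \<open>x\<^sub>\<ell>\<^sub>,\<^sub>j\<close>, at angle \<open>\<phi> = j\<theta>\<close>, both the corner \<open>(z\<^sub>\<ell> - \<delta>\<^sub>\<ell>, 1)\<close> of the box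
  and the previous point \<open>q\<^sub>\<ell>\<^sub>,\<^sub>j\<^sub>-\<^sub>1\<close> trail \<open>q\<^sub>\<ell>\<^sub>,\<^sub>j\<close> by exactly
  \<open>\<delta>\<^sub>\<ell> (cos \<phi> - cot (\<phi> + \<theta>) sin \<phi>) = \<delta>\<^sub>\<ell> sin \<theta> / sin ((j+1)\<theta>)\<close> (for \<open>j < n\<^sub>\<ell> - 1\<close>).
  With \<open>sin x \<le> x\<close> the sum is at least \<open>\<delta>\<^sub>\<ell> (sin \<theta> / \<theta>) H\<^sub>n\<^sub>-\<^sub>1 \<ge> \<delta>\<^sub>\<ell> ln n / 2\<close>, as \<open>\<theta> \<le> \<pi>/4\<close>.\<close>

lemma inverse_mult_ln_squared_antimono:
  assumes "2 \<le> m" "m \<le> n"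
  shows "1 / (real n * (ln (real n))^2) \<le> 1 / (real m * (ln (real m))^2)"
proof -
  have ln_m: "0 < ln (real m)" "ln (real m) \<le> ln (real n)" using assms by simp_all
  then have "real m * (ln (real m))^2 \<le> real n * (ln (real n))^2"
    using assms by (intro mult_mono power_mono) auto
  moreover have "0 < real m * (ln (real m))^2" using assms ln_m by simp
  ultimately show ?thesis by (simp add: frac_le)
qed

lemma summable_inverse_mult_ln_squared:
  "summable (\<lambda>m. 1 / (real (m + 2) * (ln (real (m + 2)))^2))"
proof -
  define g where "g = (\<lambda>n::nat. 1 / (real n * (ln (real n))^2))"
  \<comment> \<open>\<open>g 1 = 0\<close>, so \<open>g\<close> itself is not decreasing; the condensation test needs the patched \<open>h\<close>.\<close>
  define h where "h = (\<lambda>n. if n < 2 then g 2 else g n)"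
  have h_antimono: "h (Suc m) \<le> h m" if "0 < m" for m
    using that inverse_mult_ln_squared_antimono[of m "Suc m"]
    by (cases "m = 1") (auto simp: h_def g_def numeral_2_eq_2)
  have h_nonneg: "h n \<ge> 0" for n unfolding h_def g_def by auto
  have condensed: "2^(Suc n) * h (2^Suc n) = (1 / (ln 2)^2) * (1 / (real n + 1)^2)" for n
  proof -
    have "(2::nat) \<le> 2^Suc n" using one_le_power[of "2::nat" n] by simp
    moreover have "ln (real (2^Suc n)) = real (Suc n) * ln 2"
      by (simp only: of_nat_power ln_realpow) simp
    ultimately show ?thesis by (simp add: h_def g_def power_mult_distrib)
  qed
  have "summable (\<lambda>n. 1 / (real n + 1)^2)"
    using inverse_squares_sums[THEN sums_summable] by (simp add: add.commute)
  then have "summable (\<lambda>n. 2^(Suc n) * h (2^Suc n))"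
    unfolding condensed by (rule summable_mult)
  then have "summable (\<lambda>n. 2^n * h (2^n))" by (subst summable_Suc_iff[symmetric])
  then have "summable h" using condensation_test[of h] h_antimono h_nonneg by blast
  then have "summable (\<lambda>m. h (m + 2))" by (subst summable_iff_shift)
  then show ?thesis by (simp add: h_def g_def)
qed

lemma alphaC_pos: "alphaC > 0"
  unfolding alphaC_def
  by (rule suminf_pos[OF summable_inverse_mult_ln_squared]) (auto intro!: divide_pos_pos)

lemma deltaL_nonneg: "deltaL l \<ge> 0"
  unfolding deltaL_def using alphaC_pos by simp

lemma zL_Suc: "zL (Suc l) = zL l + deltaL (Suc l)"
  by (cases "l = 0") (auto simp: zL_def deltaL_def algebra_simps)

lemma zL_mono: "l \<le> l' \<Longrightarrow> zL l \<le> zL l'"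
  by (rule lift_Suc_mono_le[of zL]) (auto simp: zL_Suc deltaL_nonneg)

lemma zL_nonneg: "zL l \<ge> 0"
  using zL_mono[of 0 l] by (simp add: zL_def)

lemma nL_ge_3: "2 \<le> l \<Longrightarrow> nL l \<ge> 3"
proof -
  assume "2 \<le> l"
  then have "0 < (ln (real l))^2" by simp
  then have "1 \<le> nat \<lceil>(ln (real l))^2\<rceil>" by linarith
  then have "l \<le> l * nat \<lceil>(ln (real l))^2\<rceil>" by simp
  then show "nL l \<ge> 3" using \<open>2 \<le> l\<close> unfolding nL_def by linarith
qed

lemma thetaL_eq: "2 \<le> l \<Longrightarrow> thetaL l = pi / (2 * real (nL l - 1))"
  using nL_ge_3[of l] by (simp add: thetaL_def)

lemma thetaL_pos: "2 \<le> l \<Longrightarrow> thetaL l > 0"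
  using nL_ge_3[of l] by (simp add: thetaL_eq)

lemma thetaL_le_pi_quarter: "2 \<le> l \<Longrightarrow> thetaL l \<le> pi / 4"
  using nL_ge_3[of l] by (simp add: thetaL_eq field_simps)

lemma mult_thetaL_le_pi_half:
  assumes "2 \<le> l" "k < nL l"
  shows "real k * thetaL l \<le> pi / 2"
proof -
  have "real k * thetaL l \<le> real (nL l - 1) * thetaL l"
    using assms thetaL_pos[of l] by (intro mult_right_mono) auto
  also have "\<dots> = pi / 2" using nL_ge_3[OF assms(1)] by (simp add: thetaL_eq[OF assms(1)] field_simps)
  finally show ?thesis .
qed

lemma cot_nonneg: "0 < x \<Longrightarrow> x \<le> pi / 2 \<Longrightarrow> cot x \<ge> 0"
  unfolding cot_def by (intro divide_nonneg_nonneg cos_ge_zero sin_ge_zero) auto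

lemma cot_antimono:
  assumes "0 < x" "x \<le> y" "y \<le> pi / 2"
  shows "cot y \<le> cot x"
proof -
  have sin_x: "sin x > 0" using assms by (intro sin_gt_zero) auto
  have "cos y / sin y \<le> cos y / sin x"
    using assms sin_x sin_gt_zero[of y] by (intro divide_left_mono cos_ge_zero sin_monotone_2pi_le) auto
  also have "\<dots> \<le> cos x / sin x"
    using assms sin_x by (intro divide_right_mono cos_monotone_0_pi_le) auto
  finally show ?thesis by (simp add: cot_def)
qed

lemma cos_minus_cot_add_mult_sin:
  assumes "sin (x + y) \<noteq> 0"
  shows "cos x - cot (x + y) * sin x = sin y / sin (x + y)"
proof -
  have "sin y = sin (x + y) * cos x - cos (x + y) * sin x"
    using sin_diff[of "x + y" x] by simp
  then show ?thesis using assms by (simp add: cot_def field_simps)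
qed

lemma half_le_sin:
  assumes "0 < x" "x \<le> pi / 4"
  shows "x / 2 \<le> sin x"
proof -
  have "tan x \<ge> 0" using assms unfolding tan_def
    by (intro divide_nonneg_nonneg sin_ge_zero cos_ge_zero) auto
  moreover have "\<bar>x\<bar> \<le> \<bar>tan x\<bar>" using assms by (intro abs_tan_ge) auto
  ultimately have "x \<le> tan x" using assms by simp
  moreover have "1 / 2 \<le> cos x"
    using assms cos_monotone_0_pi_le[of x "pi / 3"] by (simp add: cos_60)
  ultimately have "x * (1 / 2) \<le> tan x * cos x" using assms by (intro mult_mono) auto
  also have "tan x * cos x = sin x" using \<open>1 / 2 \<le> cos x\<close> by (simp add: tan_def)
  finally show ?thesis by simp
qed

lemma zLJ_le_1:
  assumes "2 \<le> l"
  shows "zLJ l j \<le> 1"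
proof (cases "j < nL l - 1")
  case True
  then have "cot (real (j + 1) * thetaL l) \<ge> 0"
    using assms thetaL_pos[OF assms] by (intro cot_nonneg mult_thetaL_le_pi_half) auto
  then show ?thesis using True deltaL_nonneg[of l] by (simp add: zLJ_def)
qed (simp add: zLJ_def)

lemma valid_Q_even:
  "valid_Q q \<Longrightarrow> even l \<Longrightarrow> 2 \<le> l \<Longrightarrow> j < nL l \<Longrightarrow> q l j = (zL l, zLJ l j)"
  unfolding valid_Q_def by simp

lemma valid_Q_odd:
  assumes "valid_Q q" "odd l" "2 \<le> l" "j < nL l"
  obtains l' j' where "2 \<le> l'" "l' < l" "j' < nL l'" "q l j = q l' j'"
  using assms unfolding valid_Q_def by meson

lemma valid_Q_le:
  assumes "valid_Q q" "2 \<le> l" "j < nL l"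
  shows "fst (q l j) \<le> zL l \<and> snd (q l j) \<le> 1"
  using assms(2,3)
proof (induction l arbitrary: j rule: less_induct)
  case (less l)
  show ?case
  proof (cases "even l")
    case True
    then show ?thesis using valid_Q_even[OF assms(1)] zLJ_le_1 less.prems by simp
  next
    case False
    obtain l' j' where "2 \<le> l'" "l' < l" "j' < nL l'" "q l j = q l' j'"
      using valid_Q_odd[OF assms(1) False less.prems] .
    then show ?thesis using less.IH[of l' j'] zL_mono[of l' l] by auto
  qed
qed

lemma finite_before: "finite (before l j)"
proof (rule finite_subset)
  show "before l j \<subseteq> (SIGMA l':{..l}. {..<nL l'})" unfolding before_def idx_def by auto
qed auto

lemma le_gapI:
  assumes "c \<le> q l j \<bullet> xv l j"
    and "\<And>l' j'. (l', j') \<in> before l j \<Longrightarrow> c \<le> (q l j - q l' j') \<bullet> xv l j"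
  shows "c \<le> gap q l j"
  unfolding gap_def using assms finite_before by (subst Min_ge_iff) auto

lemma inner_xv_even:
  "even l \<Longrightarrow> p \<bullet> xv l j = fst p * cos (real j * thetaL l) + snd p * sin (real j * thetaL l)"
  by (cases p) (simp add: xv_def)

definition gap_lower :: "nat \<Rightarrow> nat \<Rightarrow> real" where
  "gap_lower l j =
     (if j < nL l - 1 then deltaL l * sin (thetaL l) / sin (real (j + 1) * thetaL l) else 0)"

lemma gap_lower_eq_cot:
  assumes "2 \<le> l" "j < nL l - 1"
  shows "gap_lower l j = deltaL l *
    (cos (real j * thetaL l) - cot (real (j + 1) * thetaL l) * sin (real j * thetaL l))"
proof -
  have "real (j + 1) * thetaL l \<le> pi / 2"
    using assms by (intro mult_thetaL_le_pi_half) auto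
  moreover have "0 < real (j + 1) * thetaL l" using thetaL_pos[OF assms(1)] by simp
  ultimately have "sin (real (j + 1) * thetaL l) > 0"
    using pi_gt_zero by (intro sin_gt_zero) linarith+
  moreover have "real (j + 1) * thetaL l = real j * thetaL l + thetaL l"
    by (simp add: algebra_simps)
  ultimately show ?thesis
    using cos_minus_cot_add_mult_sin[of "real j * thetaL l" "thetaL l"] assms(2)
    by (simp add: gap_lower_def)
qed

lemma gap_lower_le_box:
  assumes "2 \<le> l" "j < nL l" "a \<le> zL l - deltaL l" "b \<le> 1"
  shows "gap_lower l j \<le> (zL l - a) * cos (real j * thetaL l) + (zLJ l j - b) * sin (real j * thetaL l)"
proof -
  define \<phi> where "\<phi> = real j * thetaL l"
  have "0 \<le> \<phi>" "\<phi> \<le> pi / 2"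
    using thetaL_pos[OF assms(1)] mult_thetaL_le_pi_half[OF assms(1,2)] by (simp_all add: \<phi>_def)
  then have cos_\<phi>: "cos \<phi> \<ge> 0" and sin_\<phi>: "sin \<phi> \<ge> 0"
    by (auto intro!: cos_ge_zero sin_ge_zero)
  have "deltaL l * cos \<phi> \<le> (zL l - a) * cos \<phi>"
    using assms cos_\<phi> by (intro mult_right_mono) auto
  moreover have "(zLJ l j - 1) * sin \<phi> \<le> (zLJ l j - b) * sin \<phi>"
    using assms sin_\<phi> by (intro mult_right_mono) auto
  moreover have "gap_lower l j \<le> deltaL l * cos \<phi> + (zLJ l j - 1) * sin \<phi>"
  proof (cases "j < nL l - 1")
    case True
    then show ?thesis using gap_lower_eq_cot[OF assms(1) True]
      by (simp add: \<phi>_def zLJ_def algebra_simps)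
  next
    case False
    then show ?thesis using deltaL_nonneg[of l] cos_\<phi> by (simp add: gap_lower_def zLJ_def)
  qed
  ultimately show ?thesis by (simp add: \<phi>_def)
qed

lemma gap_lower_le_same_layer:
  assumes "2 \<le> l" "j' < j" "j < nL l"
  shows "gap_lower l j \<le> (zLJ l j - zLJ l j') * sin (real j * thetaL l)"
proof -
  define \<phi> where "\<phi> = real j * thetaL l"
  define \<psi> where "\<psi> = real (j' + 1) * thetaL l"
  have \<psi>_pos: "0 < \<psi>" using thetaL_pos[OF assms(1)] by (simp add: \<psi>_def)
  have \<psi>_le: "\<psi> \<le> \<phi>" using assms thetaL_pos[OF assms(1)]
    by (auto simp: \<phi>_def \<psi>_def intro!: mult_right_mono)
  have \<phi>_le: "\<phi> \<le> pi / 2" using mult_thetaL_le_pi_half[OF assms(1,3)] by (simp add: \<phi>_def)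
  have sin_\<phi>: "sin \<phi> > 0" using \<psi>_pos \<psi>_le \<phi>_le by (intro sin_gt_zero) auto
  have zLJ_j': "zLJ l j' = 1 - deltaL l * cot \<psi>" using assms by (simp add: zLJ_def \<psi>_def)
  show ?thesis
  proof (cases "j < nL l - 1")
    case True
    have "gap_lower l j = deltaL l * (cot \<phi> - cot (real (j + 1) * thetaL l)) * sin \<phi>"
      using gap_lower_eq_cot[OF assms(1) True] sin_\<phi> by (simp add: \<phi>_def cot_def algebra_simps)
    also have "\<dots> \<le> deltaL l * (cot \<psi> - cot (real (j + 1) * thetaL l)) * sin \<phi>"
      using cot_antimono[OF \<psi>_pos \<psi>_le \<phi>_le] deltaL_nonneg[of l] sin_\<phi>
      by (intro mult_right_mono mult_left_mono) auto
    also have "\<dots> = (zLJ l j - zLJ l j') * sin \<phi>"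
      unfolding zLJ_j' using True by (simp add: zLJ_def algebra_simps)
    finally show ?thesis by (simp add: \<phi>_def)
  next
    case False
    have "cot \<psi> \<ge> 0" using \<psi>_pos \<psi>_le \<phi>_le by (intro cot_nonneg) auto
    then show ?thesis
      using False zLJ_j' deltaL_nonneg[of l] sin_\<phi> by (simp add: gap_lower_def zLJ_def \<phi>_def)
  qed
qed

lemma gap_lower_le_gap:
  assumes Q: "valid_Q q" and "even l" "2 < l" "j < nL l"
  shows "gap_lower l j \<le> gap q l j"
proof (rule le_gapI)
  have "2 \<le> l" using assms by simp
  have q: "q l j = (zL l, zLJ l j)" using valid_Q_even assms by simp
  have box: "zL (l - 1) = zL l - deltaL l" using zL_Suc[of "l - 1"] assms by simp
  show "gap_lower l j \<le> q l j \<bullet> xv l j"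
    using gap_lower_le_box[OF \<open>2 \<le> l\<close> \<open>j < nL l\<close>, of 0 0] zL_nonneg[of "l - 1"] box
    by (simp add: inner_xv_even[OF \<open>even l\<close>] q)
  fix l' j' assume before: "(l', j') \<in> before l j"
  show "gap_lower l j \<le> (q l j - q l' j') \<bullet> xv l j"
  proof (cases "l' < l")
    case True
    have "2 \<le> l'" "j' < nL l'" using before by (auto simp: before_def idx_def)
    moreover have "zL l' \<le> zL l - deltaL l" using True box zL_mono[of l' "l - 1"] by simp
    ultimately have "fst (q l' j') \<le> zL l - deltaL l" "snd (q l' j') \<le> 1"
      using valid_Q_le[OF Q, of l' j'] by auto
    then show ?thesis using gap_lower_le_box[OF \<open>2 \<le> l\<close> \<open>j < nL l\<close>]
      by (simp add: inner_xv_even[OF \<open>even l\<close>] q)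
  next
    case False
    then have "l' = l" "j' < j" using before by (auto simp: before_def)
    then show ?thesis using gap_lower_le_same_layer[OF \<open>2 \<le> l\<close> \<open>j' < j\<close> \<open>j < nL l\<close>]
      valid_Q_even[OF Q \<open>even l\<close> \<open>2 \<le> l\<close>, of j'] assms(4)
      by (simp add: inner_xv_even[OF \<open>even l\<close>] q)
  qed
qed

lemma sum_gap_lower_ge:
  assumes "2 \<le> l"
  shows "deltaL l * ln (real (nL l)) / 2 \<le> (\<Sum>j<nL l. gap_lower l j)"
proof -
  define \<theta> where "\<theta> = thetaL l"
  define m where "m = nL l - 1"
  have nL: "nL l = Suc m" using nL_ge_3[OF assms] by (simp add: m_def)
  have \<theta>: "0 < \<theta>" "\<theta> \<le> pi / 4"
    using thetaL_pos thetaL_le_pi_quarter assms by (simp_all add: \<theta>_def)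
  have sin_\<theta>: "1 / 2 \<le> sin \<theta> / \<theta>" using half_le_sin[OF \<theta>] \<theta> by (simp add: field_simps)
  have ln_le: "ln (real (nL l)) \<le> harm m" using ln_le_harm[of m] by (simp add: nL add.commute)
  have ln_nonneg: "0 \<le> ln (real (nL l))" using nL_ge_3[OF assms] by simp
  have "0 \<le> sin \<theta> / \<theta>" using sin_\<theta> by linarith
  from mult_mono[OF sin_\<theta> ln_le this ln_nonneg]
  have "deltaL l * ((1 / 2) * ln (real (nL l))) \<le> deltaL l * ((sin \<theta> / \<theta>) * harm m)"
    using deltaL_nonneg[of l] by (rule mult_left_mono)
  then have "deltaL l * ln (real (nL l)) / 2 \<le> deltaL l * (sin \<theta> / \<theta>) * harm m"
    by simp
  also have "\<dots> = (\<Sum>j<m. deltaL l * sin \<theta> / (real (j + 1) * \<theta>))"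
    unfolding harm_altdef sum_distrib_left by (intro sum.cong) (auto simp: field_simps)
  also have "\<dots> \<le> (\<Sum>j<m. gap_lower l j)"
  proof (intro sum_mono)
    fix j assume "j \<in> {..<m}"
    then have "real (j + 1) * \<theta> \<le> pi / 2"
      using mult_thetaL_le_pi_half[OF assms, of "j + 1"] by (simp add: \<theta>_def m_def)
    then have "0 < sin (real (j + 1) * \<theta>)" using \<theta> by (intro sin_gt_zero) auto
    moreover have "sin (real (j + 1) * \<theta>) \<le> real (j + 1) * \<theta>" using \<theta> by (intro sin_x_le_x) simp
    ultimately show "deltaL l * sin \<theta> / (real (j + 1) * \<theta>) \<le> gap_lower l j"
      using \<open>j \<in> {..<m}\<close> sin_\<theta> \<theta> deltaL_nonneg[of l]
      by (auto simp: gap_lower_def m_def \<theta>_def intro!: divide_left_mono)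
  qed
  also have "\<dots> = (\<Sum>j<nL l. gap_lower l j)"
  proof -
    have "gap_lower l m = 0" by (simp add: gap_lower_def m_def)
    then show ?thesis by (simp add: nL)
  qed
  finally show ?thesis .
qed

theorem corollary5p11:
  fixes q :: "nat \<Rightarrow> nat \<Rightarrow> real \<times> real" and l :: nat
  assumes "valid_Q q" and "even l" and "l > 2"
  shows "(\<Sum>j<nL l. gap q l j) \<ge> deltaL l * ln (real (nL l)) / 2"
proof -
  have "deltaL l * ln (real (nL l)) / 2 \<le> (\<Sum>j<nL l. gap_lower l j)"
    using assms by (intro sum_gap_lower_ge) simp
  also have "\<dots> \<le> (\<Sum>j<nL l. gap q l j)"
    using assms by (intro sum_mono gap_lower_le_gap) auto
  finally show ?thesis .
qed

end
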